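(* Let $N\ge3$ and let both layers be the unweighted complete graph on $N$ nodes without self-loops. Consider the process described in the context started from the state $\boldsymbol{\xi}$ in which individual $1$ is the only cooperator in layer 1 and also the only mutant in layer 2. Let $\rho^{[1]}(\boldsymbol{\xi})$ be the probability that layer 1 eventually consists only of cooperators, and let $c>0$. Then $\left.\frac{\mathrm{d}}{\mathrm{d}\delta}\rho^{[1]}(\boldsymbol{\xi})\right|_{\delta=0}>0$ (spite is favored) if and only if $$\frac bc<-(N-1)+\frac{r-1}{c}\cdot\frac{2(N-1)^2}{N(2N-3)} .$$
   Context: $N$ individuals; in both layers $L\in\{1,2\}$, $w^{[L]}_{ij}=1$ for $i\ne j$ and $w^{[L]}_{ii}=0$. States $(x^{[1]},x^{[2]})\in\{0,1\}^N\times\{0,1\}^N$: $x^{[1]}_i=1$ means cooperator (else defector) in layer 1, $x^{[2]}_i=1$ means mutant (else resident) in layer 2. Payoff: $u_i=-c\,x^{[1]}_i+\frac{b}{N-1}\sum_{j\ne i}x^{[1]}_j+(r-1)x^{[2]}_i+1$ with $r\ge0$; fecundity $F_i=1+\delta u_i$, $\delta\ge0$. Each time step, simultaneously and independently in each layer $L$: choose $i$ uniformly at random, choose $j\neq i$ with probability $F_j/\sum_{k\ne i}F_k$, and set $x^{[L]}_i\leftarrow x^{[L]}_j$ (death-Birth updating in both layers). *)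

theory Defs
  imports "HOL-Analysis.Analysis"
begin

text \<open>Individuals are indexed 0,...,N-1 (individual 1 of the paper is index 0).
A state is a pair (x, y) of boolean vectors (layer 1: cooperator = True,
layer 2: mutant = True); entries at indices >= N are False.\<close>

type_synonym state = "(nat \<Rightarrow> bool) \<times> (nat \<Rightarrow> bool)"

definition states :: "nat \<Rightarrow> state set" where
  "states N = {(x, y). \<forall>i. N \<le> i \<longrightarrow> \<not> x i \<and> \<not> y i}"

definition payoff :: "nat \<Rightarrow> real \<Rightarrow> real \<Rightarrow> real \<Rightarrow> state \<Rightarrow> nat \<Rightarrow> real" where
  "payoff N b c r s i =
     - c * of_bool (fst s i)
     + b / (real N - 1) * (\<Sum>j\<in>{..<N} - {i}. of_bool (fst s j))
     + (r - 1) * of_bool (snd s i) + 1"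

definition fecundity :: "nat \<Rightarrow> real \<Rightarrow> real \<Rightarrow> real \<Rightarrow> real \<Rightarrow> state \<Rightarrow> nat \<Rightarrow> real" where
  "fecundity N b c r \<delta> s i = 1 + \<delta> * payoff N b c r s i"

text \<open>Death-Birth update in one layer: probability that the layer vector z becomes z',
given fecundities F: choose i uniformly, choose j ~= i proportional to F j, copy.\<close>
definition layer_prob :: "nat \<Rightarrow> (nat \<Rightarrow> real) \<Rightarrow> (nat \<Rightarrow> bool) \<Rightarrow> (nat \<Rightarrow> bool) \<Rightarrow> real" where
  "layer_prob N F z z' =
     (\<Sum>i<N. \<Sum>j\<in>{..<N} - {i}.
        (1 / real N) * (F j / (\<Sum>k\<in>{..<N} - {i}. F k)) * of_bool (z' = z(i := z j)))"

definition trans_prob :: "nat \<Rightarrow> real \<Rightarrow> real \<Rightarrow> real \<Rightarrow> real \<Rightarrow> state \<Rightarrow> state \<Rightarrow> real" where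
  "trans_prob N b c r \<delta> s s' =
     layer_prob N (fecundity N b c r \<delta> s) (fst s) (fst s')
   * layer_prob N (fecundity N b c r \<delta> s) (snd s) (snd s')"

fun all_coop_prob :: "nat \<Rightarrow> real \<Rightarrow> real \<Rightarrow> real \<Rightarrow> real \<Rightarrow> nat \<Rightarrow> state \<Rightarrow> real" where
  "all_coop_prob N b c r \<delta> 0 s = of_bool (\<forall>i<N. fst s i)"
| "all_coop_prob N b c r \<delta> (Suc t) s =
     (\<Sum>s'\<in>states N. trans_prob N b c r \<delta> s s' * all_coop_prob N b c r \<delta> t s')"

text \<open>Since the all-cooperator set is closed for layer 1, the t-step probability is
nondecreasing in t and its limit is the probability of eventual fixation of cooperators.\<close>
definition rho1 :: "nat \<Rightarrow> real \<Rightarrow> real \<Rightarrow> real \<Rightarrow> real \<Rightarrow> state \<Rightarrow> real" where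
  "rho1 N b c r \<delta> s = lim (\<lambda>t. all_coop_prob N b c r \<delta> t s)"

definition xi :: state where
  "xi = ((\<lambda>i. i = 0), (\<lambda>i. i = 0))"

end

theory Submission
  imports Defs
begin

(* Let n be the number of cooperators and V = n (N - n) the discord of layer 1; V vanishes exactly
   at fixation and bounds |n/N - [everybody cooperates]|.  One step raises the expected value of n
   by delta * drift, where drift = O(V), and for small delta it contracts the expected value of V by
   the factor 1 - 1/(N (N - 1)).  Hence the expected value of n/N after t steps and the probability
   of fixation by time t have the same limit, and
     rho(delta) = (1 + delta * sum_k E_delta[drift_delta(X_k)]) / N,
   where the series converges uniformly in small delta (Tannery's theorem), so that
   rho'(0) = sum_k E_0[drift_0(X_k)] / N.  Under neutrality drift_0 is a combination of V and of the
   cross covariance W = N * sum_l x_l y_l - n(x) n(y) of the two layers, which are eigenfunctions of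
   the neutral chain with eigenvalues 1 - 2/(N (N - 1)) and ((N - 2)/(N - 1))^2 (the layers then
   evolve independently).  Summing the two geometric series gives rho'(0) in closed form. *)

section \<open>Iterated expectations of a Markov kernel\<close>

fun markov_expect ::
    "('s \<Rightarrow> 's \<Rightarrow> real) \<Rightarrow> 's set \<Rightarrow> nat \<Rightarrow> ('s \<Rightarrow> real) \<Rightarrow> 's \<Rightarrow> real" where
  "markov_expect P S 0 h s = h s"
| "markov_expect P S (Suc t) h s = (\<Sum>s'\<in>S. P s s' * markov_expect P S t h s')"

lemma markov_expect_Suc':
  "markov_expect P S (Suc t) h s = markov_expect P S t (\<lambda>s. \<Sum>s'\<in>S. P s s' * h s') s"
  by (induction t arbitrary: s) simp_all

lemma markov_expect_cong:
  assumes "\<And>s. s \<in> S \<Longrightarrow> h s = g s" "s \<in> S"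
  shows "markov_expect P S t h s = markov_expect P S t g s"
  using assms(2) by (induction t arbitrary: s) (auto simp: assms(1))

lemma markov_expect_add:
  "markov_expect P S t (\<lambda>s. h s + g s) s = markov_expect P S t h s + markov_expect P S t g s"
  by (induction t arbitrary: s) (auto simp: distrib_left sum.distrib)

lemma markov_expect_cmult:
  "markov_expect P S t (\<lambda>s. a * h s) s = a * markov_expect P S t h s"
  by (induction t arbitrary: s) (auto simp: sum_distrib_left algebra_simps)

lemma markov_expect_diff:
  "markov_expect P S t (\<lambda>s. h s - g s) s = markov_expect P S t h s - markov_expect P S t g s"
  using markov_expect_add[of P S t h "\<lambda>s. - g s" s] markov_expect_cmult[of P S t "-1" g s] by simp

lemma markov_expect_mono:
  assumes "\<And>s s'. s \<in> S \<Longrightarrow> s' \<in> S \<Longrightarrow> P s s' \<ge> 0"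
    and "\<And>s. s \<in> S \<Longrightarrow> h s \<le> g s" and "s \<in> S"
  shows "markov_expect P S t h s \<le> markov_expect P S t g s"
  using assms(3) by (induction t arbitrary: s) (auto intro!: sum_mono mult_left_mono assms(1,2))

lemma markov_expect_abs_le:
  assumes nonneg: "\<And>s s'. s \<in> S \<Longrightarrow> s' \<in> S \<Longrightarrow> P s s' \<ge> 0"
    and bound: "\<And>s. s \<in> S \<Longrightarrow> \<bar>h s\<bar> \<le> g s" and "s \<in> S"
  shows "\<bar>markov_expect P S t h s\<bar> \<le> markov_expect P S t g s"
proof -
  have "h s' \<le> g s'" "- h s' \<le> g s'" if "s' \<in> S" for s'
    using bound[OF that] by linarith+
  then have "markov_expect P S t h s \<le> markov_expect P S t g s"
    and "markov_expect P S t (\<lambda>s. - h s) s \<le> markov_expect P S t g s"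
    by (auto intro: markov_expect_mono[OF nonneg _ \<open>s \<in> S\<close>])
  then show ?thesis
    using markov_expect_cmult[of P S t "-1" h s] by simp
qed

lemma markov_expect_le_geometric:
  assumes "\<And>s s'. s \<in> S \<Longrightarrow> s' \<in> S \<Longrightarrow> P s s' \<ge> 0"
    and "\<And>s. s \<in> S \<Longrightarrow> (\<Sum>s'\<in>S. P s s' * V s') \<le> \<theta> * V s" and "\<theta> \<ge> 0" and "s \<in> S"
  shows "markov_expect P S t V s \<le> \<theta> ^ t * V s"
  using assms(4)
proof (induction t arbitrary: s)
  case (Suc t)
  have "markov_expect P S (Suc t) V s = markov_expect P S t (\<lambda>s. \<Sum>s'\<in>S. P s s' * V s') s"
    by (rule markov_expect_Suc')
  also have "\<dots> \<le> markov_expect P S t (\<lambda>s. \<theta> * V s) s"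
    by (rule markov_expect_mono[OF assms(1,2) Suc.prems])
  also have "\<dots> = \<theta> * markov_expect P S t V s"
    by (rule markov_expect_cmult)
  also have "\<dots> \<le> \<theta> * (\<theta> ^ t * V s)"
    using Suc assms(3) by (simp add: mult_left_mono)
  finally show ?case by simp
qed simp

lemma markov_expect_eigenfunction:
  assumes "\<And>s. s \<in> S \<Longrightarrow> (\<Sum>s'\<in>S. P s s' * V s') = \<mu> * V s" and "s \<in> S"
  shows "markov_expect P S t V s = \<mu> ^ t * V s"
  using assms(2)
proof (induction t arbitrary: s)
  case (Suc t)
  have "markov_expect P S (Suc t) V s = markov_expect P S t (\<lambda>s. \<mu> * V s) s"
    unfolding markov_expect_Suc' by (rule markov_expect_cong[OF assms(1) Suc.prems])
  then show ?case using Suc by (simp add: markov_expect_cmult)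
qed simp

lemma tendsto_markov_expect:
  assumes "\<And>s s'. ((\<lambda>x. P x s s') \<longlongrightarrow> P0 s s') F"
    and "\<And>s. ((\<lambda>x. h x s) \<longlongrightarrow> h0 s) F"
  shows "((\<lambda>x. markov_expect (P x) S t (h x) s) \<longlongrightarrow> markov_expect P0 S t h0 s) F"
  by (induction t arbitrary: s) (auto intro!: tendsto_sum tendsto_mult assms)

section \<open>One death-Birth step in a layer\<close>

definition layer_states :: "nat \<Rightarrow> (nat \<Rightarrow> bool) set" where
  "layer_states N = {z. \<forall>i. N \<le> i \<longrightarrow> \<not> z i}"

lemma layer_states_eq_image: "layer_states N = (\<lambda>A i. i \<in> A) ` Pow {..<N}"
proof
  show "layer_states N \<subseteq> (\<lambda>A i. i \<in> A) ` Pow {..<N}"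
  proof
    fix z assume "z \<in> layer_states N"
    then have "{i. z i} \<in> Pow {..<N}" by (auto simp: layer_states_def not_le[symmetric])
    moreover have "z = (\<lambda>i. i \<in> {i. z i})" by simp
    ultimately show "z \<in> (\<lambda>A i. i \<in> A) ` Pow {..<N}" by blast
  qed
qed (auto simp: layer_states_def)

lemma finite_layer_states: "finite (layer_states N)"
  by (simp add: layer_states_eq_image)

lemma states_eq_Times: "states N = layer_states N \<times> layer_states N"
  by (auto simp: states_def layer_states_def)

lemma fun_upd_in_layer_states: "z \<in> layer_states N \<Longrightarrow> i < N \<Longrightarrow> z(i := v) \<in> layer_states N"
  by (auto simp: layer_states_def)

definition replace_prob :: "nat \<Rightarrow> (nat \<Rightarrow> real) \<Rightarrow> nat \<Rightarrow> nat \<Rightarrow> real" where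
  "replace_prob N F i j = 1 / real N * (F j / (\<Sum>k\<in>{..<N} - {i}. F k))"

definition layer_expect ::
    "nat \<Rightarrow> (nat \<Rightarrow> real) \<Rightarrow> (nat \<Rightarrow> bool) \<Rightarrow> ((nat \<Rightarrow> bool) \<Rightarrow> real) \<Rightarrow> real" where
  "layer_expect N F z h = (\<Sum>i<N. \<Sum>j\<in>{..<N} - {i}. replace_prob N F i j * h (z(i := z j)))"

lemma sum_layer_prob:
  assumes z: "z \<in> layer_states N"
  shows "(\<Sum>z'\<in>layer_states N. layer_prob N F z z' * h z') = layer_expect N F z h"
proof -
  have delta: "(\<Sum>z'\<in>layer_states N. of_bool (z' = w) * h z') = h w"
    if "w \<in> layer_states N" for w
  proof -
    have "(\<Sum>z'\<in>layer_states N. of_bool (z' = w) * h z')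
        = (\<Sum>z'\<in>layer_states N. if z' = w then h w else 0)"
      by (rule sum.cong) auto
    then show ?thesis using that by (simp add: finite_layer_states)
  qed
  have "(\<Sum>z'\<in>layer_states N. layer_prob N F z z' * h z')
      = (\<Sum>i<N. \<Sum>j\<in>{..<N} - {i}. \<Sum>z'\<in>layer_states N.
           replace_prob N F i j * (of_bool (z' = z(i := z j)) * h z'))"
    unfolding layer_prob_def replace_prob_def sum_distrib_right
    by (subst sum.swap, rule sum.cong, simp, subst sum.swap) (simp add: mult.assoc)
  also have "\<dots> = layer_expect N F z h"
    unfolding layer_expect_def sum_distrib_left[symmetric]
    by (intro sum.cong refl) (simp add: delta fun_upd_in_layer_states[OF z])
  finally show ?thesis .
qed

lemma sum_trans_prob_product:
  fixes b c r \<delta> :: real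
  assumes "s \<in> states N"
  defines "F \<equiv> fecundity N b c r \<delta> s"
  shows "(\<Sum>s'\<in>states N. trans_prob N b c r \<delta> s s' * (g (fst s') * h (snd s')))
       = layer_expect N F (fst s) g * layer_expect N F (snd s) h"
proof -
  have "(\<Sum>s'\<in>states N. trans_prob N b c r \<delta> s s' * (g (fst s') * h (snd s')))
      = (\<Sum>x'\<in>layer_states N. \<Sum>y'\<in>layer_states N.
           (layer_prob N F (fst s) x' * g x') * (layer_prob N F (snd s) y' * h y'))"
    unfolding states_eq_Times trans_prob_def F_def sum.cartesian_product
    by (rule sum.cong) (auto simp: algebra_simps)
  also have "\<dots> = layer_expect N F (fst s) g * layer_expect N F (snd s) h"
    using assms(1) by (simp add: sum_product[symmetric] sum_layer_prob states_eq_Times mem_Times_iff)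
  finally show ?thesis .
qed

lemma sum_Diff_singleton_lessThan:
  fixes g :: "nat \<Rightarrow> 'a :: ab_group_add"
  shows "i < N \<Longrightarrow> (\<Sum>j\<in>{..<N} - {i}. g j) = (\<Sum>j<N. g j) - g i"
  by (simp add: sum_diff1)

lemma real_card_Diff_singleton_lessThan: "i < N \<Longrightarrow> real (card ({..<N} - {i})) = real N - 1"
  by (simp add: of_nat_diff)

lemma sum_replace_prob:
  assumes "(\<Sum>k\<in>{..<N} - {i}. F k) \<noteq> 0" "i < N"
  shows "(\<Sum>j\<in>{..<N} - {i}. replace_prob N F i j) = 1 / real N"
  using assms unfolding replace_prob_def by (simp add: sum_distrib_left[symmetric] sum_divide_distrib[symmetric])

lemma layer_expect_increment:
  assumes "N > 0"
    and den: "\<And>i. i < N \<Longrightarrow> (\<Sum>k\<in>{..<N} - {i}. F k) \<noteq> 0"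
    and inc: "\<And>i j. i < N \<Longrightarrow> j < N \<Longrightarrow> j \<noteq> i \<Longrightarrow> h (z(i := z j)) = h z + \<beta> i j"
  shows "layer_expect N F z h
       = h z + (\<Sum>i<N. \<Sum>j\<in>{..<N} - {i}. replace_prob N F i j * \<beta> i j)"
proof -
  have "layer_expect N F z h
      = (\<Sum>i<N. h z * (\<Sum>j\<in>{..<N} - {i}. replace_prob N F i j))
        + (\<Sum>i<N. \<Sum>j\<in>{..<N} - {i}. replace_prob N F i j * \<beta> i j)"
    unfolding layer_expect_def sum.distrib[symmetric] sum_distrib_left
    by (intro sum.cong refl) (simp add: inc algebra_simps)
  also have "(\<Sum>i<N. h z * (\<Sum>j\<in>{..<N} - {i}. replace_prob N F i j)) = h z"
    using \<open>N > 0\<close> by (simp add: sum_replace_prob den)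
  finally show ?thesis .
qed

lemma layer_expect_const:
  assumes "N > 0" "\<And>i. i < N \<Longrightarrow> (\<Sum>k\<in>{..<N} - {i}. F k) \<noteq> 0"
  shows "layer_expect N F z (\<lambda>_. a) = a"
  using layer_expect_increment[OF assms, where z=z and h="\<lambda>_. a" and \<beta>="\<lambda>_ _. 0"] by simp

lemma all_coop_prob_eq_markov_expect:
  "all_coop_prob N b c r \<delta> t s
     = markov_expect (trans_prob N b c r \<delta>) (states N) t (\<lambda>s. of_bool (\<forall>i<N. fst s i)) s"
  by (induction t arbitrary: s) simp_all

lemma xi_in_states: "N > 0 \<Longrightarrow> xi \<in> states N"
  by (simp add: states_def xi_def)

section \<open>Counting cooperators\<close>

declare sum_of_bool_eq [simp del] sum_of_bool_mult_eq [simp del] sum_mult_of_bool_eq [simp del]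

definition count_true :: "nat \<Rightarrow> (nat \<Rightarrow> bool) \<Rightarrow> real" where
  "count_true N z = (\<Sum>i<N. of_bool (z i))"

definition copy_gain :: "(nat \<Rightarrow> bool) \<Rightarrow> nat \<Rightarrow> nat \<Rightarrow> real" where
  "copy_gain z i j = of_bool (z j) - of_bool (z i)"

definition discord :: "nat \<Rightarrow> (nat \<Rightarrow> bool) \<Rightarrow> real" where
  "discord N z = count_true N z * (real N - count_true N z)"

lemma count_true_eq_card: "count_true N z = real (card {i\<in>{..<N}. z i})"
  by (simp add: count_true_def sum_of_bool_eq Int_def)

lemma count_true_bounds: "0 \<le> count_true N z" "count_true N z \<le> real N"
  using sum_mono[of "{..<N}" "\<lambda>i. of_bool (z i) :: real" "\<lambda>_. 1"]
  by (simp_all add: count_true_def sum_nonneg)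

lemma discord_nonneg: "discord N z \<ge> 0"
  using count_true_bounds[of N z] by (simp add: discord_def)

lemma count_true_copy:
  assumes "i < N"
  shows "count_true N (z(i := z j)) = count_true N z + copy_gain z i j"
proof -
  have "count_true N (z(i := v)) = of_bool v + (\<Sum>k\<in>{..<N} - {i}. of_bool (z k))" for v
    unfolding count_true_def using assms
    by (subst sum.remove[of _ i]) (auto intro!: sum.cong)
  from this[of "z j"] this[of "z i"] show ?thesis by (simp add: copy_gain_def)
qed

lemma sum_copy_gain: "(\<Sum>i<N. \<Sum>j\<in>{..<N} - {i}. copy_gain z i j) = 0"
proof -
  have "(\<Sum>i<N. \<Sum>j\<in>{..<N} - {i}. copy_gain z i j)
      = (\<Sum>i<N. count_true N z - real N * of_bool (z i))"
    by (intro sum.cong refl)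
      (simp add: sum_Diff_singleton_lessThan copy_gain_def sum_subtractf count_true_def)
  also have "\<dots> = 0"
    by (simp add: sum_subtractf count_true_def sum_distrib_left)
  finally show ?thesis .
qed

lemma copy_gain_sq_eq_abs: "(copy_gain z i j)\<^sup>2 = \<bar>copy_gain z i j\<bar>"
  by (simp add: copy_gain_def)

lemma sum_copy_gain_sq: "(\<Sum>i<N. \<Sum>j\<in>{..<N} - {i}. (copy_gain z i j)\<^sup>2) = 2 * discord N z"
proof -
  have sq: "(copy_gain z i j)\<^sup>2 = of_bool (z j) + of_bool (z i) - 2 * of_bool (z i) * of_bool (z j)"
    for i j by (simp add: copy_gain_def)
  have "(\<Sum>i<N. \<Sum>j\<in>{..<N} - {i}. (copy_gain z i j)\<^sup>2)
      = (\<Sum>i<N. count_true N z + real N * of_bool (z i) - 2 * count_true N z * of_bool (z i))"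
    by (intro sum.cong refl)
      (simp add: sq sum_Diff_singleton_lessThan sum.distrib sum_subtractf count_true_def
        sum_distrib_left)
  also have "\<dots> = 2 * discord N z"
    by (simp only: sum.distrib sum_subtractf flip: sum_distrib_left count_true_def)
      (simp add: discord_def algebra_simps)
  finally show ?thesis .
qed

lemma layer_expect_count:
  assumes "N > 0" "\<And>i. i < N \<Longrightarrow> (\<Sum>k\<in>{..<N} - {i}. F k) \<noteq> 0"
  shows "layer_expect N F z (count_true N)
       = count_true N z + (\<Sum>i<N. \<Sum>j\<in>{..<N} - {i}. replace_prob N F i j * copy_gain z i j)"
  using layer_expect_increment[OF assms, where h="count_true N" and \<beta>="copy_gain z"]
  by (simp add: count_true_copy)

lemma layer_expect_discord:
  assumes "N > 0" "\<And>i. i < N \<Longrightarrow> (\<Sum>k\<in>{..<N} - {i}. F k) \<noteq> 0"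
  shows "layer_expect N F z (discord N)
       = discord N z
         + (real N - 2 * count_true N z)
           * (\<Sum>i<N. \<Sum>j\<in>{..<N} - {i}. replace_prob N F i j * copy_gain z i j)
         - (\<Sum>i<N. \<Sum>j\<in>{..<N} - {i}. replace_prob N F i j * (copy_gain z i j)\<^sup>2)"
proof -
  have "layer_expect N F z (discord N)
      = discord N z + (\<Sum>i<N. \<Sum>j\<in>{..<N} - {i}. replace_prob N F i j
          * ((real N - 2 * count_true N z) * copy_gain z i j - (copy_gain z i j)\<^sup>2))"
    using layer_expect_increment[OF assms, where h="discord N"
        and \<beta>="\<lambda>i j. (real N - 2 * count_true N z) * copy_gain z i j - (copy_gain z i j)\<^sup>2"]
    by (simp add: discord_def count_true_copy algebra_simps power2_eq_square)
  then show ?thesis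
    by (simp add: right_diff_distrib sum_subtractf sum_distrib_left mult.left_commute)
qed

lemma count_true_fraction_approx:
  assumes "N > 0"
  shows "\<bar>count_true N z / real N - of_bool (\<forall>i<N. z i)\<bar> \<le> discord N z"
proof -
  define k where "k = card {i\<in>{..<N}. z i}"
  have k: "count_true N z = real k" by (simp add: count_true_eq_card k_def)
  show ?thesis
  proof (cases "\<forall>i<N. z i")
    case True
    then have "{i\<in>{..<N}. z i} = {..<N}" by auto
    then have "k = N" unfolding k_def by simp
    with True assms show ?thesis by (simp add: discord_def k)
  next
    case False
    then obtain i where "i < N" "\<not> z i" by auto
    then have "{i\<in>{..<N}. z i} \<subseteq> {..<N} - {i}" by auto
    then have "k < N"
      unfolding k_def using \<open>i < N\<close> card_mono[of "{..<N} - {i}" "{i\<in>{..<N}. z i}"] by fastforce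
    then have "real k / real N \<le> real k" "real k \<le> real k * (real N - real k)"
      by (auto simp: divide_le_eq mult_le_cancel_left1)
    with False show ?thesis by (auto simp: discord_def k)
  qed
qed

lemma count_true_xi: "N > 0 \<Longrightarrow> count_true N (fst xi) = 1"
  using sum.delta[of "{..<N}" 0 "\<lambda>_. 1 :: real"] by (simp add: count_true_def xi_def of_bool_def)

lemma discord_xi: "N > 0 \<Longrightarrow> discord N (fst xi) = real N - 1"
  by (simp add: discord_def count_true_xi)

section \<open>The neutral process\<close>

lemma replace_prob_neutral: "i < N \<Longrightarrow> replace_prob N (\<lambda>_. 1) i j = 1 / (real N * (real N - 1))"
  by (simp add: replace_prob_def real_card_Diff_singleton_lessThan)

lemma neutral_denominator_ne_0:
  "(N::nat) \<ge> 2 \<Longrightarrow> i < N \<Longrightarrow> (\<Sum>k\<in>{..<N} - {i}. (\<lambda>_. 1 :: real) k) \<noteq> 0"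
  using real_card_Diff_singleton_lessThan[of i N] by simp

lemma sum_replace_prob_neutral:
  "(\<Sum>i<N. \<Sum>j\<in>{..<N} - {i}. replace_prob N (\<lambda>_. 1) i j * g i j)
     = (\<Sum>i<N. \<Sum>j\<in>{..<N} - {i}. g i j) / (real N * (real N - 1))"
  unfolding sum_divide_distrib by (intro sum.cong refl) (simp add: replace_prob_neutral)

lemma neutral_layer_expect_count:
  assumes "N \<ge> 2"
  shows "layer_expect N (\<lambda>_. 1) z (count_true N) = count_true N z"
  using layer_expect_count[of N "\<lambda>_. 1" z] neutral_denominator_ne_0[OF assms] assms
  by (simp add: sum_replace_prob_neutral sum_copy_gain)

lemma neutral_layer_expect_discord:
  assumes "N \<ge> 2"
  shows "layer_expect N (\<lambda>_. 1) z (discord N) = (1 - 2 / (real N * (real N - 1))) * discord N z"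
proof -
  have "layer_expect N (\<lambda>_. 1) z (discord N) = discord N z - 2 * discord N z / (real N * (real N - 1))"
    using layer_expect_discord[of N "\<lambda>_. 1" z] neutral_denominator_ne_0[OF assms] assms
    unfolding sum_replace_prob_neutral sum_copy_gain sum_copy_gain_sq by simp
  then show ?thesis by (simp add: algebra_simps)
qed

lemma neutral_layer_expect_indicator:
  assumes "N \<ge> 2" "l < N"
  shows "layer_expect N (\<lambda>_. 1) x (\<lambda>z. of_bool (z l))
       = (real N - 2) / (real N - 1) * of_bool (x l) + count_true N x / (real N * (real N - 1))"
proof -
  define p where "p = 1 / (real N * (real N - 1))"
  have row: "(\<Sum>j\<in>{..<N} - {i}. p * of_bool ((x(i := x j)) l))
      = (if i = l then p * (count_true N x - of_bool (x l)) else p * (real N - 1) * of_bool (x l))"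
    if "i < N" for i
    using that by (auto simp: sum_distrib_left[symmetric] count_true_def sum_Diff_singleton_lessThan
        real_card_Diff_singleton_lessThan)
  have "layer_expect N (\<lambda>_. 1) x (\<lambda>z. of_bool (z l))
      = (\<Sum>i<N. \<Sum>j\<in>{..<N} - {i}. p * of_bool ((x(i := x j)) l))"
    unfolding layer_expect_def p_def by (intro sum.cong refl) (simp add: replace_prob_neutral)
  also have "\<dots> = p * (count_true N x - of_bool (x l))
      + (\<Sum>i\<in>{..<N} - {l}. p * (real N - 1) * of_bool (x l))"
    using assms(2) row[of l]
    by (simp add: sum.remove[OF finite_lessThan, of l] row del: fun_upd_apply)
  also have "\<dots> = (real N - 2) / (real N - 1) * of_bool (x l) + count_true N x / (real N * (real N - 1))"
    using assms by (simp add: real_card_Diff_singleton_lessThan p_def divide_simps) (simp add: algebra_simps)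
  finally show ?thesis .
qed

text \<open>\<open>N\<^sup>2\<close> times the covariance of the two layer indicators of a uniformly chosen individual.\<close>

definition cross_cov :: "nat \<Rightarrow> (nat \<Rightarrow> bool) \<Rightarrow> (nat \<Rightarrow> bool) \<Rightarrow> real" where
  "cross_cov N x y
     = real N * (\<Sum>l<N. of_bool (x l) * of_bool (y l)) - count_true N x * count_true N y"

lemma cross_cov_step_algebra:
  fixes X Y :: "nat \<Rightarrow> real"
  assumes "L + real N * B = 1" "n = (\<Sum>l<N. X l)" "m = (\<Sum>l<N. Y l)"
  shows "real N * (\<Sum>l<N. (L * X l + B * n) * (L * Y l + B * m)) - n * m
       = L\<^sup>2 * (real N * (\<Sum>l<N. X l * Y l) - n * m)"
proof -
  have "(\<Sum>l<N. (L * X l + B * n) * (L * Y l + B * m))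
      = L\<^sup>2 * (\<Sum>l<N. X l * Y l) + 2 * L * B * n * m + real N * B\<^sup>2 * n * m"
    using assms(2,3)
    by (simp add: algebra_simps power2_eq_square sum.distrib flip: sum_distrib_left sum_distrib_right)
  moreover have "real N * (2 * L * B * n * m + real N * B\<^sup>2 * n * m) - n * m
      = ((L + real N * B)\<^sup>2 - 1 - L\<^sup>2) * n * m"
    by (simp add: algebra_simps power2_eq_square)
  ultimately show ?thesis using assms(1) by (simp add: algebra_simps)
qed

lemma cross_cov_xi: "N > 0 \<Longrightarrow> cross_cov N (fst xi) (snd xi) = real N - 1"
proof -
  assume "N > 0"
  moreover have "count_true N (snd xi) = count_true N (fst xi)"
    by (simp add: xi_def)
  moreover have "(\<Sum>l<N. of_bool (fst xi l) * of_bool (snd xi l) :: real) = count_true N (fst xi)"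
    unfolding count_true_def by (rule sum.cong) (auto simp: xi_def)
  ultimately show ?thesis by (simp add: cross_cov_def count_true_xi)
qed

lemma fecundity_neutral: "fecundity N b c r 0 s = (\<lambda>_. 1)"
  by (simp add: fecundity_def fun_eq_iff)

lemma sum_trans_prob_fst:
  assumes "s \<in> states N" "N > 0"
    and "\<And>i. i < N \<Longrightarrow> (\<Sum>k\<in>{..<N} - {i}. fecundity N b c r \<delta> s k) \<noteq> 0"
  shows "(\<Sum>s'\<in>states N. trans_prob N b c r \<delta> s s' * g (fst s'))
       = layer_expect N (fecundity N b c r \<delta> s) (fst s) g"
  using sum_trans_prob_product[OF assms(1), where g=g and h="\<lambda>_. 1"]
    layer_expect_const[OF assms(2,3), where a=1]
  by simp

lemma neutral_expect_discord:
  assumes "N \<ge> 2" "s \<in> states N"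
  shows "(\<Sum>s'\<in>states N. trans_prob N b c r 0 s s' * discord N (fst s'))
       = (1 - 2 / (real N * (real N - 1))) * discord N (fst s)"
  using sum_trans_prob_fst[OF assms(2), where \<delta>=0] neutral_denominator_ne_0[OF assms(1)] assms(1)
  by (simp add: fecundity_neutral neutral_layer_expect_discord)

lemma neutral_expect_cross_cov:
  assumes "N \<ge> 2" "s \<in> states N"
  shows "(\<Sum>s'\<in>states N. trans_prob N b c r 0 s s' * cross_cov N (fst s') (snd s'))
       = ((real N - 2) / (real N - 1))\<^sup>2 * cross_cov N (fst s) (snd s)"
proof -
  let ?P = "trans_prob N b c r 0 s"
  let ?X = "\<lambda>l z. of_bool (z l) :: real"
  define L where "L = (real N - 2) / (real N - 1)"
  define B where "B = 1 / (real N * (real N - 1))"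
  have LB: "L + real N * B = 1"
    using assms(1) by (simp add: L_def B_def field_simps)
  have indicator: "(\<Sum>s'\<in>states N. ?P s' * (?X l (fst s') * ?X l (snd s')))
      = (L * ?X l (fst s) + B * count_true N (fst s)) * (L * ?X l (snd s) + B * count_true N (snd s))"
    if "l < N" for l
    using sum_trans_prob_product[OF assms(2), where \<delta>=0 and g="?X l" and h="?X l"]
      neutral_layer_expect_indicator[OF assms(1) that]
    by (simp add: fecundity_neutral L_def B_def)
  have count: "(\<Sum>s'\<in>states N. ?P s' * (count_true N (fst s') * count_true N (snd s')))
      = count_true N (fst s) * count_true N (snd s)"
    using sum_trans_prob_product[OF assms(2), where \<delta>=0 and g="count_true N" and h="count_true N"]
    by (simp add: fecundity_neutral neutral_layer_expect_count[OF assms(1)])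
  have "(\<Sum>s'\<in>states N. ?P s' * cross_cov N (fst s') (snd s'))
      = real N * (\<Sum>l<N. \<Sum>s'\<in>states N. ?P s' * (?X l (fst s') * ?X l (snd s')))
        - (\<Sum>s'\<in>states N. ?P s' * (count_true N (fst s') * count_true N (snd s')))"
    unfolding cross_cov_def
    by (simp add: right_diff_distrib sum_subtractf sum_distrib_left mult.left_commute
        sum.swap[of _ "{..<N}"])
  also have "\<dots> = real N * (\<Sum>l<N. (L * ?X l (fst s) + B * count_true N (fst s))
                                * (L * ?X l (snd s) + B * count_true N (snd s)))
                   - count_true N (fst s) * count_true N (snd s)"
    by (simp add: indicator count)
  also have "\<dots> = L\<^sup>2 * cross_cov N (fst s) (snd s)"
    unfolding cross_cov_def by (rule cross_cov_step_algebra[OF LB]) (simp_all add: count_true_def)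
  finally show ?thesis unfolding L_def .
qed

section \<open>Weak selection\<close>

lemma payoff_eq_linear:
  assumes "j < N"
  shows "payoff N b c r s j
       = (- c - b / (real N - 1)) * of_bool (fst s j) + (r - 1) * of_bool (snd s j)
         + (b * count_true N (fst s) / (real N - 1) + 1)"
proof -
  have others: "(\<Sum>k\<in>{..<N} - {j}. of_bool (fst s k)) = count_true N (fst s) - of_bool (fst s j)"
    using assms by (simp add: count_true_def sum_Diff_singleton_lessThan)
  show ?thesis
    unfolding payoff_def others by (simp add: algebra_simps add_divide_distrib diff_divide_distrib)
qed

lemma sum_offdiag_weighted_gain:
  fixes u X :: "nat \<Rightarrow> real"
  shows "(\<Sum>i<N. \<Sum>j\<in>{..<N} - {i}. ((real N - 1) * u j - (\<Sum>k\<in>{..<N} - {i}. u k)) * (X j - X i))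
       = (real N - 2) * (real N * (\<Sum>j<N. u j * X j) - (\<Sum>j<N. u j) * (\<Sum>j<N. X j))"
proof -
  define T where "T = (\<Sum>j<N. u j)"
  define SX where "SX = (\<Sum>j<N. X j)"
  define UX where "UX = (\<Sum>j<N. u j * X j)"
  have row: "(\<Sum>j\<in>{..<N} - {i}. ((real N - 1) * u j - (\<Sum>k\<in>{..<N} - {i}. u k)) * (X j - X i))
      = (real N - 1) * UX - (real N - 1) * T * X i + (u i - T) * SX - real N * (u i - T) * X i"
    if "i < N" for i
  proof -
    have "(\<Sum>j\<in>{..<N} - {i}. ((real N - 1) * u j - (\<Sum>k\<in>{..<N} - {i}. u k)) * (X j - X i))
        = (\<Sum>j<N. (real N - 1) * (u j * X j) - (real N - 1) * X i * u j + (u i - T) * X j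
            - (u i - T) * X i)"
      using that by (simp add: sum_Diff_singleton_lessThan T_def algebra_simps)
    then show ?thesis
      by (simp add: sum.distrib sum_subtractf UX_def T_def SX_def flip: sum_distrib_left)
  qed
  have "(\<Sum>i<N. \<Sum>j\<in>{..<N} - {i}. ((real N - 1) * u j - (\<Sum>k\<in>{..<N} - {i}. u k)) * (X j - X i))
      = (\<Sum>i<N. (real N - 1) * UX - (real N - 1) * T * X i + (u i - T) * SX
          - real N * (u i * X i) + real N * T * X i)"
    by (rule sum.cong[OF refl]) (simp only: lessThan_iff row, simp add: algebra_simps)
  also have "\<dots> = (real N - 2) * (real N * UX - T * SX)"
    by (simp add: sum.distrib sum_subtractf algebra_simps flip: sum_distrib_left)
      (simp add: UX_def T_def SX_def algebra_simps)
  finally show ?thesis unfolding T_def SX_def UX_def .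
qed

locale dB_complete_graph =
  fixes N :: nat and b c r :: real
  assumes three_le_N: "3 \<le> N"
begin

lemma N_gt_0: "N > 0" and N_pos: "real N > 0" and N_minus_1_pos: "real N - 1 > 0"
  using three_le_N by simp_all

lemma xi_in_states_N: "xi \<in> states N"
  by (rule xi_in_states[OF N_gt_0])

abbreviation fec :: "real \<Rightarrow> state \<Rightarrow> nat \<Rightarrow> real" where
  "fec \<delta> s \<equiv> fecundity N b c r \<delta> s"

abbreviation step_prob :: "real \<Rightarrow> state \<Rightarrow> state \<Rightarrow> real" where
  "step_prob \<delta> \<equiv> trans_prob N b c r \<delta>"

definition payoff_bound :: real where
  "payoff_bound = \<bar>b\<bar> + \<bar>c\<bar> + \<bar>r - 1\<bar> + 1"

text \<open>Small enough for all fecundities to be positive and for the selection part of the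
  replacement probabilities not to spoil the contraction of discord.\<close>

definition delta_max :: real where
  "delta_max = 1 / (16 * payoff_bound * real N)"

definition others_payoff :: "state \<Rightarrow> nat \<Rightarrow> real" where
  "others_payoff s i = (\<Sum>k\<in>{..<N} - {i}. payoff N b c r s k)"

definition selection_coeff :: "real \<Rightarrow> state \<Rightarrow> nat \<Rightarrow> nat \<Rightarrow> real" where
  "selection_coeff \<delta> s i j
     = ((real N - 1) * payoff N b c r s j - others_payoff s i)
       / ((real N - 1) * (real N - 1 + \<delta> * others_payoff s i))"

definition coeff_bound :: real where
  "coeff_bound = 4 * payoff_bound / (real N - 1)"

lemma payoff_bound_ge_1: "payoff_bound \<ge> 1"
  by (simp add: payoff_bound_def)

lemma delta_max_pos: "delta_max > 0"
  using payoff_bound_ge_1 N_pos by (simp add: delta_max_def)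

lemma coeff_bound_nonneg: "coeff_bound \<ge> 0"
  using payoff_bound_ge_1 N_minus_1_pos by (simp add: coeff_bound_def)

lemma delta_payoff_bound_le:
  assumes "\<delta> \<in> {0..delta_max}"
  shows "\<delta> * payoff_bound \<le> 1 / (16 * real N)"
proof -
  have "\<delta> * payoff_bound \<le> delta_max * payoff_bound"
    using assms payoff_bound_ge_1 by (simp add: mult_right_mono)
  also have "\<dots> = 1 / (16 * real N)"
    using payoff_bound_ge_1 by (simp add: delta_max_def)
  finally show ?thesis .
qed

lemma payoff_abs_le:
  assumes "k < N"
  shows "\<bar>payoff N b c r s k\<bar> \<le> payoff_bound"
proof -
  let ?S = "\<Sum>j\<in>{..<N} - {k}. of_bool (fst s j) :: real"
  have "?S \<le> (\<Sum>j\<in>{..<N} - {k}. 1)"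
    by (rule sum_mono) simp
  then have "0 \<le> ?S" "?S \<le> real N - 1"
    using assms by (simp_all add: sum_nonneg real_card_Diff_singleton_lessThan)
  then have "\<bar>b / (real N - 1) * ?S\<bar> = \<bar>b\<bar> * (?S / (real N - 1))" "?S / (real N - 1) \<le> 1"
    using N_minus_1_pos by (simp_all add: abs_mult)
  then have "\<bar>b / (real N - 1) * ?S\<bar> \<le> \<bar>b\<bar>"
    using mult_left_le[of "?S / (real N - 1)" "\<bar>b\<bar>"] by simp
  moreover have "\<bar>c * of_bool (fst s k)\<bar> \<le> \<bar>c\<bar>" "\<bar>(r - 1) * of_bool (snd s k)\<bar> \<le> \<bar>r - 1\<bar>"
    by (simp_all add: abs_mult)
  ultimately show ?thesis
    unfolding payoff_def payoff_bound_def by linarith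
qed

lemma others_payoff_abs_le:
  assumes "i < N"
  shows "\<bar>others_payoff s i\<bar> \<le> (real N - 1) * payoff_bound"
proof -
  have "\<bar>others_payoff s i\<bar> \<le> (\<Sum>k\<in>{..<N} - {i}. payoff_bound)"
    unfolding others_payoff_def by (rule order_trans[OF sum_abs sum_mono]) (simp add: payoff_abs_le)
  then show ?thesis
    using assms by (simp add: real_card_Diff_singleton_lessThan)
qed

lemma sum_fecundity_others:
  assumes "i < N"
  shows "(\<Sum>k\<in>{..<N} - {i}. fec \<delta> s k) = real N - 1 + \<delta> * others_payoff s i"
  using assms
  by (simp add: fecundity_def others_payoff_def sum.distrib sum_distrib_left
      real_card_Diff_singleton_lessThan)

lemma fecundity_pos:
  assumes "\<delta> \<in> {0..delta_max}" "k < N"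
  shows "fec \<delta> s k > 0"
proof -
  have "\<bar>\<delta> * payoff N b c r s k\<bar> \<le> \<delta> * payoff_bound"
    using assms payoff_abs_le[OF assms(2)] by (simp add: abs_mult mult_left_mono)
  moreover have "1 / (16 * real N) < 1"
    using N_pos three_le_N by simp
  ultimately show ?thesis
    unfolding fecundity_def using delta_payoff_bound_le[OF assms(1)] by linarith
qed

lemma sum_fecundity_others_ge:
  assumes "\<delta> \<in> {0..delta_max}" "i < N"
  shows "2 * (real N - 1 + \<delta> * others_payoff s i) \<ge> real N - 1"
proof -
  have "\<bar>\<delta> * others_payoff s i\<bar> \<le> \<delta> * ((real N - 1) * payoff_bound)"
    using assms others_payoff_abs_le[OF assms(2)] by (simp add: abs_mult mult_left_mono)
  also have "\<dots> = (real N - 1) * (\<delta> * payoff_bound)"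
    by simp
  also have "\<dots> \<le> (real N - 1) * (1 / 2)"
  proof (intro mult_left_mono)
    have "1 / (16 * real N) \<le> 1 / 2"
      using three_le_N by (simp add: field_simps)
    then show "\<delta> * payoff_bound \<le> 1 / 2"
      using delta_payoff_bound_le[OF assms(1)] by linarith
  qed (use N_minus_1_pos in simp)
  finally show ?thesis by (simp add: abs_le_iff algebra_simps)
qed

lemma sum_fecundity_others_pos:
  assumes "\<delta> \<in> {0..delta_max}" "i < N"
  shows "(\<Sum>k\<in>{..<N} - {i}. fec \<delta> s k) > 0"
  using sum_fecundity_others_ge[OF assms, of s] N_minus_1_pos
  by (simp add: sum_fecundity_others[OF assms(2)])

lemma fecundity_ratio_expansion:
  assumes "\<delta> \<in> {0..delta_max}" "i < N"
  shows "fec \<delta> s j / (\<Sum>k\<in>{..<N} - {i}. fec \<delta> s k)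
       = 1 / (real N - 1) + \<delta> * selection_coeff \<delta> s i j"
proof -
  have expand: "(1 + \<delta> * p) / (m + \<delta> * U) = 1 / m + \<delta> * ((m * p - U) / (m * (m + \<delta> * U)))"
    if "m > 0" "m + \<delta> * U > 0" for m p U :: real
    using that by (simp add: divide_simps) (simp add: algebra_simps)
  have "real N - 1 + \<delta> * others_payoff s i > 0"
    using sum_fecundity_others_ge[OF assms, of s] N_minus_1_pos by (simp add: algebra_simps)
  from expand[OF N_minus_1_pos this] show ?thesis
    unfolding sum_fecundity_others[OF assms(2)] selection_coeff_def by (simp add: fecundity_def)
qed

lemma selection_coeff_abs_le:
  assumes "\<delta> \<in> {0..delta_max}" "i < N" "j < N"
  shows "\<bar>selection_coeff \<delta> s i j\<bar> \<le> coeff_bound"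
proof -
  let ?M = payoff_bound and ?D = "real N - 1 + \<delta> * others_payoff s i"
  have "\<bar>(real N - 1) * payoff N b c r s j\<bar> \<le> (real N - 1) * ?M"
    using payoff_abs_le[OF assms(3), of s] N_minus_1_pos by (simp add: abs_mult)
  then have num: "\<bar>(real N - 1) * payoff N b c r s j - others_payoff s i\<bar> \<le> 2 * (real N - 1) * ?M"
    using others_payoff_abs_le[OF assms(2), of s]
      abs_triangle_ineq4[of "(real N - 1) * payoff N b c r s j" "others_payoff s i"]
    by linarith
  have den: "(real N - 1) * ?D \<ge> (real N - 1) * ((real N - 1) / 2)"
    using sum_fecundity_others_ge[OF assms(1,2), of s] N_minus_1_pos by (intro mult_left_mono) auto
  have "\<bar>selection_coeff \<delta> s i j\<bar>
      = \<bar>(real N - 1) * payoff N b c r s j - others_payoff s i\<bar> / ((real N - 1) * ?D)"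
    unfolding selection_coeff_def using den N_minus_1_pos by (simp add: abs_divide)
  also have "\<dots> \<le> (2 * (real N - 1) * ?M) / ((real N - 1) * ((real N - 1) / 2))"
    using num den N_minus_1_pos payoff_bound_ge_1 by (intro frac_le) auto
  also have "\<dots> = coeff_bound"
  proof -
    have "2 * m * M / (m * (m / 2)) = 4 * M / m" if "m > 0" for m M :: real
      using that by (simp add: field_simps)
    from this[OF N_minus_1_pos] show ?thesis by (simp only: coeff_bound_def)
  qed
  finally show ?thesis .
qed

lemma delta_coeff_bound_le:
  assumes "\<delta> \<in> {0..delta_max}"
  shows "4 * (\<delta> * coeff_bound) \<le> 1 / (real N * (real N - 1))"
proof -
  have "4 * (\<delta> * coeff_bound) = 16 * (\<delta> * payoff_bound) / (real N - 1)"
    by (simp add: coeff_bound_def)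
  also have "\<dots> \<le> 16 * (1 / (16 * real N)) / (real N - 1)"
    using delta_payoff_bound_le[OF assms] N_minus_1_pos by (intro divide_right_mono) auto
  finally show ?thesis by simp
qed

definition drift :: "real \<Rightarrow> state \<Rightarrow> real" where
  "drift \<delta> s = (\<Sum>i<N. \<Sum>j\<in>{..<N} - {i}. selection_coeff \<delta> s i j * copy_gain (fst s) i j) / real N"

lemma replace_prob_expansion:
  assumes "\<delta> \<in> {0..delta_max}" "i < N"
  shows "replace_prob N (fec \<delta> s) i j = (1 / (real N - 1) + \<delta> * selection_coeff \<delta> s i j) / real N"
  using fecundity_ratio_expansion[OF assms] by (simp add: replace_prob_def)

lemma sum_replace_prob_copy_gain:
  assumes "\<delta> \<in> {0..delta_max}"
  shows "(\<Sum>i<N. \<Sum>j\<in>{..<N} - {i}. replace_prob N (fec \<delta> s) i j * copy_gain (fst s) i j)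
       = \<delta> * drift \<delta> s"
proof -
  have "(\<Sum>i<N. \<Sum>j\<in>{..<N} - {i}. replace_prob N (fec \<delta> s) i j * copy_gain (fst s) i j)
      = (\<Sum>i<N. \<Sum>j\<in>{..<N} - {i}. copy_gain (fst s) i j) / (real N * (real N - 1))
        + \<delta> * drift \<delta> s"
    unfolding drift_def sum_divide_distrib sum_distrib_left sum.distrib[symmetric]
    by (intro sum.cong refl) (simp add: replace_prob_expansion[OF assms] field_simps)
  then show ?thesis by (simp add: sum_copy_gain)
qed

lemma drift_abs_le:
  assumes "\<delta> \<in> {0..delta_max}"
  shows "\<bar>drift \<delta> s\<bar> \<le> 2 * coeff_bound / real N * discord N (fst s)"
proof -
  have "\<bar>\<Sum>i<N. \<Sum>j\<in>{..<N} - {i}. selection_coeff \<delta> s i j * copy_gain (fst s) i j\<bar>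
      \<le> (\<Sum>i<N. \<Sum>j\<in>{..<N} - {i}. coeff_bound * (copy_gain (fst s) i j)\<^sup>2)"
  proof (rule order_trans[OF sum_abs sum_mono], rule order_trans[OF sum_abs sum_mono])
    fix i j assume "i \<in> {..<N}" "j \<in> {..<N} - {i}"
    then show "\<bar>selection_coeff \<delta> s i j * copy_gain (fst s) i j\<bar> \<le> coeff_bound * (copy_gain (fst s) i j)\<^sup>2"
      using selection_coeff_abs_le[OF assms, of i j s]
      by (simp add: abs_mult copy_gain_sq_eq_abs mult_right_mono)
  qed
  also have "\<dots> = 2 * coeff_bound * discord N (fst s)"
    by (simp add: sum_copy_gain_sq flip: sum_distrib_left)
  finally show ?thesis
    using N_pos by (simp add: drift_def abs_divide divide_le_eq mult.commute)
qed

lemma sum_replace_prob_copy_gain_sq_ge: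
  assumes "\<delta> \<in> {0..delta_max}"
  shows "(\<Sum>i<N. \<Sum>j\<in>{..<N} - {i}. replace_prob N (fec \<delta> s) i j * (copy_gain (fst s) i j)\<^sup>2)
       \<ge> (1 / (real N - 1) - \<delta> * coeff_bound) / real N * (2 * discord N (fst s))"
proof -
  have "(\<Sum>i<N. \<Sum>j\<in>{..<N} - {i}. (1 / (real N - 1) - \<delta> * coeff_bound) / real N * (copy_gain (fst s) i j)\<^sup>2)
      \<le> (\<Sum>i<N. \<Sum>j\<in>{..<N} - {i}. replace_prob N (fec \<delta> s) i j * (copy_gain (fst s) i j)\<^sup>2)"
  proof (intro sum_mono mult_right_mono)
    fix i j assume "i \<in> {..<N}" "j \<in> {..<N} - {i}"
    then have "- coeff_bound \<le> selection_coeff \<delta> s i j"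
      using selection_coeff_abs_le[OF assms, of i j s] by simp
    then have "\<delta> * - coeff_bound \<le> \<delta> * selection_coeff \<delta> s i j"
      using assms by (intro mult_left_mono) auto
    then show "(1 / (real N - 1) - \<delta> * coeff_bound) / real N \<le> replace_prob N (fec \<delta> s) i j"
      using \<open>i \<in> {..<N}\<close> N_pos
      by (simp add: replace_prob_expansion[OF assms] divide_right_mono)
  qed simp
  then show ?thesis
    by (simp only: sum_distrib_left[symmetric] sum_copy_gain_sq)
qed

lemma step_prob_nonneg:
  assumes "\<delta> \<in> {0..delta_max}"
  shows "step_prob \<delta> s s' \<ge> 0"
proof -
  have "layer_prob N (fec \<delta> s) z z' \<ge> 0" for z z'
    unfolding layer_prob_def
    using fecundity_pos[OF assms] sum_fecundity_others_pos[OF assms]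
    by (intro sum_nonneg) (simp add: less_imp_le)
  then show ?thesis by (simp add: trans_prob_def)
qed

lemma sum_step_prob_fst:
  assumes "\<delta> \<in> {0..delta_max}" "s \<in> states N"
  shows "(\<Sum>s'\<in>states N. step_prob \<delta> s s' * g (fst s')) = layer_expect N (fec \<delta> s) (fst s) g"
  using sum_trans_prob_fst[OF assms(2)] sum_fecundity_others_pos[OF assms(1)] N_pos
  by (simp add: less_imp_neq[symmetric])

lemma expect_count_step:
  assumes "\<delta> \<in> {0..delta_max}" "s \<in> states N"
  shows "(\<Sum>s'\<in>states N. step_prob \<delta> s s' * count_true N (fst s'))
       = count_true N (fst s) + \<delta> * drift \<delta> s"
  using layer_expect_count[of N "fec \<delta> s" "fst s"] sum_fecundity_others_pos[OF assms(1)] N_pos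
  by (simp add: sum_step_prob_fst[OF assms] sum_replace_prob_copy_gain[OF assms(1)]
      less_imp_neq[symmetric])

definition decay_rate :: real where
  "decay_rate = 1 - 1 / (real N * (real N - 1))"

lemma decay_rate_bounds: "0 \<le> decay_rate" "decay_rate < 1"
proof -
  have "real N * (real N - 1) \<ge> 1 * 1"
    using three_le_N by (intro mult_mono) auto
  then show "0 \<le> decay_rate" "decay_rate < 1"
    by (auto simp: decay_rate_def field_simps)
qed

lemma selection_term_le:
  assumes "\<delta> \<in> {0..delta_max}"
  shows "(real N - 2 * count_true N (fst s)) * (\<delta> * drift \<delta> s)
       \<le> 2 * (\<delta> * coeff_bound) * discord N (fst s)"
proof -
  have "\<delta> * \<bar>drift \<delta> s\<bar> \<le> \<delta> * (2 * coeff_bound / real N * discord N (fst s))"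
    using drift_abs_le[OF assms, of s] assms by (intro mult_left_mono) auto
  then have drift: "\<bar>\<delta> * drift \<delta> s\<bar> \<le> 2 * (\<delta> * coeff_bound) / real N * discord N (fst s)"
    using assms by (simp add: abs_mult mult.left_commute)
  have "\<bar>real N - 2 * count_true N (fst s)\<bar> \<le> real N"
    using count_true_bounds[of N "fst s"] by (simp add: abs_le_iff)
  from this drift have "\<bar>real N - 2 * count_true N (fst s)\<bar> * \<bar>\<delta> * drift \<delta> s\<bar>
      \<le> real N * (2 * (\<delta> * coeff_bound) / real N * discord N (fst s))"
    by (rule mult_mono) (use N_pos in auto)
  then show ?thesis
    using N_pos by (simp add: abs_mult[symmetric])
qed

lemma expect_discord_step_le:
  assumes "\<delta> \<in> {0..delta_max}" "s \<in> states N"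
  shows "(\<Sum>s'\<in>states N. step_prob \<delta> s s' * discord N (fst s'))
       \<le> decay_rate * discord N (fst s)"
proof -
  define V where "V = discord N (fst s)"
  define t where "t = \<delta> * coeff_bound"
  define e where "e = 1 / (real N * (real N - 1))"
  define B where
    "B = (\<Sum>i<N. \<Sum>j\<in>{..<N} - {i}. replace_prob N (fec \<delta> s) i j * (copy_gain (fst s) i j)\<^sup>2)"
  have V: "V \<ge> 0" by (simp add: V_def discord_nonneg)
  have t: "t \<ge> 0" "4 * t \<le> e"
    using assms(1) coeff_bound_nonneg delta_coeff_bound_le[OF assms(1)] by (simp_all add: t_def e_def)
  have expect: "(\<Sum>s'\<in>states N. step_prob \<delta> s s' * discord N (fst s'))
      = V + (real N - 2 * count_true N (fst s)) * (\<delta> * drift \<delta> s) - B"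
    using layer_expect_discord[of N "fec \<delta> s" "fst s"] sum_fecundity_others_pos[OF assms(1)] N_pos
    by (simp add: sum_step_prob_fst[OF assms] sum_replace_prob_copy_gain[OF assms(1)]
        V_def B_def less_imp_neq[symmetric])
  have "B \<ge> (1 / (real N - 1) - t) / real N * (2 * V)"
    using sum_replace_prob_copy_gain_sq_ge[OF assms(1), of s] by (simp add: B_def t_def V_def)
  moreover have "(1 / (real N - 1) - t) / real N * (2 * V) = 2 * e * V - 2 * (t * V) / real N"
    using N_pos N_minus_1_pos by (simp add: e_def field_simps)
  moreover have "(t * V) / real N \<le> t * V"
    using mult_nonneg_nonneg[OF t(1) V] three_le_N by (simp add: divide_le_eq mult_le_cancel_left1)
  ultimately show ?thesis
    using expect selection_term_le[OF assms(1), of s] t V mult_right_mono[OF t(2) V]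
    by (simp add: decay_rate_def e_def V_def t_def) argo
qed

lemma drift_neutral:
  "drift 0 s = (real N - 2) / (real N * (real N - 1)\<^sup>2)
     * ((- c - b / (real N - 1)) * discord N (fst s) + (r - 1) * cross_cov N (fst s) (snd s))"
proof -
  let ?p = "payoff N b c r s" and ?x = "\<lambda>j. of_bool (fst s j) :: real"
  let ?n = "count_true N (fst s)" and ?m = "count_true N (snd s)"
  let ?a = "- c - b / (real N - 1)" and ?\<kappa> = "b * count_true N (fst s) / (real N - 1) + 1"
  have "drift 0 s = (\<Sum>i<N. \<Sum>j\<in>{..<N} - {i}.
      ((real N - 1) * ?p j - (\<Sum>k\<in>{..<N} - {i}. ?p k)) * (?x j - ?x i)) / (real N * (real N - 1)\<^sup>2)"
    unfolding drift_def selection_coeff_def others_payoff_def copy_gain_def sum_divide_distrib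
    by (simp add: power2_eq_square mult_ac)
  also have "\<dots> = (real N - 2) * (real N * (\<Sum>j<N. ?p j * ?x j) - (\<Sum>j<N. ?p j) * ?n)
      / (real N * (real N - 1)\<^sup>2)"
    by (simp add: sum_offdiag_weighted_gain count_true_def)
  also have "(\<Sum>j<N. ?p j * ?x j)
      = (\<Sum>j<N. ?a * ?x j + (r - 1) * (?x j * of_bool (snd s j)) + ?\<kappa> * ?x j)"
    by (rule sum.cong) (auto simp: payoff_eq_linear)
  also have "\<dots> = ?a * ?n + (r - 1) * (\<Sum>l<N. ?x l * of_bool (snd s l)) + ?\<kappa> * ?n"
    by (simp add: count_true_def sum.distrib flip: sum_distrib_left)
  also have "(\<Sum>j<N. ?p j) = ?a * ?n + (r - 1) * ?m + real N * ?\<kappa>"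
    by (simp add: payoff_eq_linear count_true_def sum.distrib flip: sum_distrib_left)
  finally have "drift 0 s = (real N - 2)
      * (real N * (?a * ?n + (r - 1) * (\<Sum>l<N. ?x l * of_bool (snd s l)) + ?\<kappa> * ?n)
         - (?a * ?n + (r - 1) * ?m + real N * ?\<kappa>) * ?n)
      / (real N * (real N - 1)\<^sup>2)" .
  moreover have "M * (A * n + r1 * k + \<kappa> * n) - (A * n + r1 * m + M * \<kappa>) * n
      = A * (n * (M - n)) + r1 * (M * k - n * m)" for M A n r1 k \<kappa> m :: real
    by (simp add: algebra_simps)
  ultimately show ?thesis
    by (simp only: discord_def cross_cov_def times_divide_eq_left)
qed

end

section \<open>The fixation probability and its derivative\<close>

lemma has_real_derivative_at_right_of_slope:
  fixes f g :: "real \<Rightarrow> real"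
  assumes "d > 0" and slope: "\<And>x. x \<in> {0..d} \<Longrightarrow> f x = f 0 + x * g x"
    and "(g \<longlongrightarrow> g 0) (at_right 0)"
  shows "(f has_real_derivative g 0) (at 0 within {0..})"
  unfolding has_field_derivative_iff at_within_Ici_at_right
proof (rule Lim_transform_eventually[OF assms(3)])
  have "eventually (\<lambda>x. x \<in> {0<..<d}) (at_right (0::real))"
    by (rule eventually_at_right_real[OF \<open>d > 0\<close>])
  then show "\<forall>\<^sub>F x in at_right 0. g x = (f x - f 0) / (x - 0)"
  proof eventually_elim
    case (elim x)
    then have "f x - f 0 = x * g x" using slope[of x] by simp
    with elim show ?case by simp
  qed
qed

context dB_complete_graph
begin

lemma expect_discord_iter_le:
  assumes "\<delta> \<in> {0..delta_max}" "s \<in> states N"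
  shows "markov_expect (step_prob \<delta>) (states N) t (\<lambda>s. discord N (fst s)) s
       \<le> decay_rate ^ t * discord N (fst s)"
  by (rule markov_expect_le_geometric[OF step_prob_nonneg[OF assms(1)] _ decay_rate_bounds(1) assms(2)])
    (rule expect_discord_step_le[OF assms(1)])

lemma expect_drift_iter_abs_le:
  assumes "\<delta> \<in> {0..delta_max}" "s \<in> states N"
  shows "\<bar>markov_expect (step_prob \<delta>) (states N) k (drift \<delta>) s\<bar>
       \<le> 2 * coeff_bound / real N * (decay_rate ^ k * discord N (fst s))"
proof -
  have "\<bar>markov_expect (step_prob \<delta>) (states N) k (drift \<delta>) s\<bar>
      \<le> markov_expect (step_prob \<delta>) (states N) k (\<lambda>s. 2 * coeff_bound / real N * discord N (fst s)) s"
    by (rule markov_expect_abs_le[OF step_prob_nonneg[OF assms(1)] drift_abs_le[OF assms(1)] assms(2)])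
  also have "\<dots> \<le> 2 * coeff_bound / real N * (decay_rate ^ k * discord N (fst s))"
    unfolding markov_expect_cmult using coeff_bound_nonneg
    by (intro mult_left_mono expect_discord_iter_le[OF assms]) simp
  finally show ?thesis .
qed

lemma expect_count_iter:
  assumes "\<delta> \<in> {0..delta_max}" "s \<in> states N"
  shows "markov_expect (step_prob \<delta>) (states N) t (\<lambda>s. count_true N (fst s)) s
       = count_true N (fst s) + \<delta> * (\<Sum>k<t. markov_expect (step_prob \<delta>) (states N) k (drift \<delta>) s)"
proof (induction t)
  case (Suc t)
  have "markov_expect (step_prob \<delta>) (states N) (Suc t) (\<lambda>s. count_true N (fst s)) s
      = markov_expect (step_prob \<delta>) (states N) t (\<lambda>s. count_true N (fst s) + \<delta> * drift \<delta> s) s"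
    unfolding markov_expect_Suc'
    by (rule markov_expect_cong[OF expect_count_step[OF assms(1)] assms(2)])
  then show ?case
    using Suc by (simp add: markov_expect_add markov_expect_cmult algebra_simps)
qed simp

lemma all_coop_prob_approx:
  assumes "\<delta> \<in> {0..delta_max}" "s \<in> states N"
  shows "\<bar>markov_expect (step_prob \<delta>) (states N) t (\<lambda>s. count_true N (fst s)) s / real N
          - all_coop_prob N b c r \<delta> t s\<bar> \<le> decay_rate ^ t * discord N (fst s)"
proof -
  have "\<bar>markov_expect (step_prob \<delta>) (states N) t (\<lambda>s. count_true N (fst s)) s / real N
          - all_coop_prob N b c r \<delta> t s\<bar>
      = \<bar>markov_expect (step_prob \<delta>) (states N) t
           (\<lambda>s. count_true N (fst s) / real N - of_bool (\<forall>i<N. fst s i)) s\<bar>"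
    unfolding all_coop_prob_eq_markov_expect markov_expect_diff divide_inverse
      mult.commute[of _ "inverse (real N)"] markov_expect_cmult ..
  also have "\<dots> \<le> markov_expect (step_prob \<delta>) (states N) t (\<lambda>s. discord N (fst s)) s"
    using count_true_fraction_approx N_pos
    by (intro markov_expect_abs_le[OF step_prob_nonneg[OF assms(1)] _ assms(2)]) simp
  also have "\<dots> \<le> decay_rate ^ t * discord N (fst s)"
    by (rule expect_discord_iter_le[OF assms])
  finally show ?thesis .
qed

definition drift_sum :: "real \<Rightarrow> real" where
  "drift_sum \<delta> = (\<Sum>k. markov_expect (step_prob \<delta>) (states N) k (drift \<delta>) xi)"

lemma summable_drift_bound: "summable (\<lambda>k. 2 * coeff_bound / real N * (decay_rate ^ k * V))"
  using decay_rate_bounds by (intro summable_mult summable_mult2 summable_geometric) auto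

lemma summable_drift_iter:
  assumes "\<delta> \<in> {0..delta_max}"
  shows "summable (\<lambda>k. markov_expect (step_prob \<delta>) (states N) k (drift \<delta>) xi)"
  by (rule summable_comparison_test'[OF summable_drift_bound])
    (use expect_drift_iter_abs_le[OF assms xi_in_states_N] in simp)

lemma all_coop_prob_tendsto:
  assumes "\<delta> \<in> {0..delta_max}"
  shows "(\<lambda>t. all_coop_prob N b c r \<delta> t xi) \<longlonglongrightarrow> (1 + \<delta> * drift_sum \<delta>) / real N"
proof -
  let ?G = "\<lambda>t. markov_expect (step_prob \<delta>) (states N) t (\<lambda>s. count_true N (fst s)) xi / real N"
  have "?G \<longlonglongrightarrow> (1 + \<delta> * drift_sum \<delta>) / real N"
    unfolding expect_count_iter[OF assms xi_in_states_N] count_true_xi[OF N_gt_0] drift_sum_def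
    by (intro tendsto_intros summable_LIMSEQ summable_drift_iter[OF assms]) (use N_pos in simp)
  moreover have "(\<lambda>t. ?G t - all_coop_prob N b c r \<delta> t xi) \<longlonglongrightarrow> 0"
  proof (rule Lim_null_comparison)
    show "\<forall>\<^sub>F t in sequentially. norm (?G t - all_coop_prob N b c r \<delta> t xi)
            \<le> decay_rate ^ t * discord N (fst xi)"
      using all_coop_prob_approx[OF assms xi_in_states_N] by simp
    show "(\<lambda>t. decay_rate ^ t * discord N (fst xi)) \<longlonglongrightarrow> 0"
      using decay_rate_bounds by (intro tendsto_mult_left_zero LIMSEQ_power_zero) auto
  qed
  ultimately show ?thesis
    using tendsto_diff by fastforce
qed

lemma rho1_xi_eq:
  assumes "\<delta> \<in> {0..delta_max}"
  shows "rho1 N b c r \<delta> xi = (1 + \<delta> * drift_sum \<delta>) / real N"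
  unfolding rho1_def by (rule limI[OF all_coop_prob_tendsto[OF assms]])

lemma isCont_trans_prob: "isCont (\<lambda>\<delta>. step_prob \<delta> s s') 0"
  unfolding trans_prob_def layer_prob_def fecundity_def
  using N_minus_1_pos by (intro continuous_intros) (auto simp: real_card_Diff_singleton_lessThan)

lemma isCont_drift: "isCont (\<lambda>\<delta>. drift \<delta> s) 0"
  unfolding drift_def selection_coeff_def
  using N_minus_1_pos by (intro continuous_intros) auto

lemma drift_sum_tendsto: "(drift_sum \<longlongrightarrow> drift_sum 0) (at_right 0)"
proof -
  have limit: "((\<lambda>\<delta>. markov_expect (step_prob \<delta>) (states N) k (drift \<delta>) xi)
          \<longlongrightarrow> markov_expect (step_prob 0) (states N) k (drift 0) xi) (at_right 0)" for k
    using isCont_trans_prob isCont_drift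
    by (intro tendsto_markov_expect) (auto simp: isCont_def intro: tendsto_mono[OF at_le])
  have bound: "eventually (\<lambda>(k, \<delta>). norm (markov_expect (step_prob \<delta>) (states N) k (drift \<delta>) xi)
      \<le> 2 * coeff_bound / real N * (decay_rate ^ k * discord N (fst xi))) (at_top \<times>\<^sub>F at_right 0)"
    unfolding eventually_prod_filter
  proof (intro exI conjI allI impI)
    show "eventually (\<lambda>_. True) (at_top :: nat filter)" by simp
    show "eventually (\<lambda>\<delta>. \<delta> \<in> {0..delta_max}) (at_right (0::real))"
      using eventually_at_right_real[OF delta_max_pos] by eventually_elim auto
  qed (use expect_drift_iter_abs_le xi_in_states_N in auto)
  show ?thesis
    unfolding drift_sum_def using tannerys_theorem[OF limit bound summable_drift_bound] by simp
qed

lemma rho1_has_derivative: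
  "((\<lambda>\<delta>. rho1 N b c r \<delta> xi) has_real_derivative drift_sum 0 / real N) (at 0 within {0..})"
proof (rule has_real_derivative_at_right_of_slope[OF delta_max_pos, where g="\<lambda>\<delta>. drift_sum \<delta> / real N"])
  show "rho1 N b c r \<delta> xi = rho1 N b c r 0 xi + \<delta> * (drift_sum \<delta> / real N)"
    if "\<delta> \<in> {0..delta_max}" for \<delta>
    using rho1_xi_eq[OF that] rho1_xi_eq[of 0] delta_max_pos by (simp add: add_divide_distrib)
  show "((\<lambda>\<delta>. drift_sum \<delta> / real N) \<longlongrightarrow> drift_sum 0 / real N) (at_right 0)"
    by (intro tendsto_divide drift_sum_tendsto tendsto_const) (use N_pos in simp)
qed

lemma neutral_drift_iter:
  assumes "s \<in> states N"
  shows "markov_expect (step_prob 0) (states N) k (drift 0) s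
       = (real N - 2) / (real N * (real N - 1)\<^sup>2)
         * ((- c - b / (real N - 1)) * ((1 - 2 / (real N * (real N - 1))) ^ k * discord N (fst s))
            + (r - 1) * ((((real N - 2) / (real N - 1))\<^sup>2) ^ k * cross_cov N (fst s) (snd s)))"
proof -
  have N2: "N \<ge> 2" using three_le_N by simp
  have "markov_expect (step_prob 0) (states N) k (\<lambda>s. discord N (fst s)) s
      = (1 - 2 / (real N * (real N - 1))) ^ k * discord N (fst s)"
    by (rule markov_expect_eigenfunction[OF neutral_expect_discord[OF N2] assms])
  moreover have "markov_expect (step_prob 0) (states N) k (\<lambda>s. cross_cov N (fst s) (snd s)) s
      = (((real N - 2) / (real N - 1))\<^sup>2) ^ k * cross_cov N (fst s) (snd s)"
    by (rule markov_expect_eigenfunction[OF neutral_expect_cross_cov[OF N2] assms])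
  ultimately show ?thesis
    unfolding drift_neutral markov_expect_cmult markov_expect_add by simp
qed

lemma neutral_eigenvalue_sums:
  "(\<lambda>k. (1 - 2 / (real N * (real N - 1))) ^ k) sums (real N * (real N - 1) / 2)"
  "(\<lambda>k. (((real N - 2) / (real N - 1))\<^sup>2) ^ k) sums ((real N - 1)\<^sup>2 / (2 * real N - 3))"
proof -
  have N: "real N \<ge> 3" using three_le_N by simp
  have "real N * (real N - 1) \<ge> 3 * 2"
    using N by (intro mult_mono) auto
  then have "norm (1 - 2 / (real N * (real N - 1))) < 1"
    by (simp add: field_simps)
  from geometric_sums[OF this] show "(\<lambda>k. (1 - 2 / (real N * (real N - 1))) ^ k) sums (real N * (real N - 1) / 2)"
    by simp
  have "1 - (k / m)\<^sup>2 = (m\<^sup>2 - k\<^sup>2) / m\<^sup>2" if "m \<noteq> 0" for k m :: real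
    using that by (simp add: field_simps)
  moreover have "(real N - 1)\<^sup>2 - (real N - 2)\<^sup>2 = 2 * real N - 3"
    by (simp add: power2_eq_square algebra_simps)
  ultimately have "1 / (1 - ((real N - 2) / (real N - 1))\<^sup>2) = (real N - 1)\<^sup>2 / (2 * real N - 3)"
    using N by simp
  moreover have "norm (((real N - 2) / (real N - 1))\<^sup>2) < 1"
    using N by (simp add: power_less_one_iff abs_less_iff)
  ultimately show "(\<lambda>k. (((real N - 2) / (real N - 1))\<^sup>2) ^ k) sums ((real N - 1)\<^sup>2 / (2 * real N - 3))"
    using geometric_sums by metis
qed

lemma drift_sum_neutral:
  "drift_sum 0 = (real N - 2) / 2 * (- c - b / (real N - 1))
     + (real N - 2) * (real N - 1) / (real N * (2 * real N - 3)) * (r - 1)"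
proof -
  have "(\<lambda>k. markov_expect (step_prob 0) (states N) k (drift 0) xi)
      sums ((real N - 2) / (real N * (real N - 1)\<^sup>2)
            * ((- c - b / (real N - 1)) * (real N * (real N - 1) / 2 * (real N - 1))
               + (r - 1) * ((real N - 1)\<^sup>2 / (2 * real N - 3) * (real N - 1))))"
    unfolding neutral_drift_iter[OF xi_in_states_N] discord_xi[OF N_gt_0] cross_cov_xi[OF N_gt_0]
    by (intro sums_mult sums_add sums_mult2 neutral_eigenvalue_sums)
  moreover have "(n - 2) / (n * m\<^sup>2) * (a * (n * m / 2 * m) + (r - 1) * (m\<^sup>2 / q * m))
      = (n - 2) / 2 * a + (n - 2) * m / (n * q) * (r - 1)"
    if "n \<noteq> 0" "m \<noteq> 0" "q \<noteq> 0" for n m q a :: real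
    using that by (simp add: field_simps power2_eq_square)
  ultimately show ?thesis
    using three_le_N by (simp add: drift_sum_def sums_iff)
qed

end

lemma spite_condition_iff:
  fixes n b c r :: real
  assumes "n \<ge> 3" "c > 0"
  shows "((n - 2) / 2 * (- c - b / (n - 1)) + (n - 2) * (n - 1) / (n * (2 * n - 3)) * (r - 1)) / n > 0
     \<longleftrightarrow> b / c < - (n - 1) + (r - 1) / c * (2 * (n - 1)\<^sup>2 / (n * (2 * n - 3)))"
proof -
  define R where "R = - (n - 1) + (r - 1) / c * (2 * (n - 1)\<^sup>2 / (n * (2 * n - 3)))"
  define k where "k = (n - 2) * c / (2 * n * (n - 1))"
  have "((n - 2) / 2 * (- c - b / (n - 1)) + (n - 2) * (n - 1) / (n * (2 * n - 3)) * (r - 1)) / n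
      = k * (R - b / c)"
  proof -
    have "((n - 2) / 2 * (- c - b / m) + (n - 2) * m / (n * q) * (r - 1)) / n
        = (n - 2) * c / (2 * n * m) * (- m + (r - 1) / c * (2 * m\<^sup>2 / (n * q)) - b / c)"
      if "m \<noteq> 0" "q \<noteq> 0" for m q
      using that assms by (simp add: field_simps power2_eq_square)
    from this[of "n - 1" "2 * n - 3"] show ?thesis
      using assms by (simp add: R_def k_def)
  qed
  moreover have "k > 0"
    using assms by (simp add: k_def)
  ultimately show ?thesis
    unfolding R_def[symmetric] by (simp add: zero_less_mult_iff)
qed

theorem mainTheorem4:
  fixes N :: nat and b c r :: real
  assumes "N \<ge> 3" and "c > 0" and "r \<ge> 0"
  shows "\<exists>D. ((\<lambda>\<delta>. rho1 N b c r \<delta> xi) has_real_derivative D) (at 0 within {0..})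
           \<and> (D > 0 \<longleftrightarrow>
               b / c < - (real N - 1)
                 + (r - 1) / c * (2 * (real N - 1)^2 / (real N * (2 * real N - 3))))"
proof -
  interpret dB_complete_graph N b c r
    using assms(1) by unfold_locales
  have "drift_sum 0 / real N > 0 \<longleftrightarrow>
      b / c < - (real N - 1) + (r - 1) / c * (2 * (real N - 1)^2 / (real N * (2 * real N - 3)))"
    unfolding drift_sum_neutral by (rule spite_condition_iff) (use assms in auto)
  then show ?thesis
    using rho1_has_derivative by blast
qed

end
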